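(* Let $\zeta$ be a smooth divergence-free unit vector field on $\mathbb{S}^3$ whose integral curves are great circles, and let $\omega$ be the dual 1-form, $\omega(a)=\langle\zeta,a\rangle$. Then $\omega\wedge d\omega$ vanishes nowhere, i.e. $\omega$ is a contact form on $\mathbb{S}^3$.
   Context: $\mathbb{S}^3\subset\mathbb{R}^4$ with its round metric $\langle\cdot,\cdot\rangle$. *)

theory Defs
  imports "HOL-Analysis.Analysis"
begin

text \<open>Ambient space R^4 and the unit sphere S^3 = sphere 0 1.
  A vector field on S^3 is represented by a map zeta on R^4; only its values on
  (a neighbourhood of) the sphere matter.\<close>

fun Ck_on :: "nat \<Rightarrow> 'a::euclidean_space set \<Rightarrow> ('a \<Rightarrow> 'b::real_normed_vector) \<Rightarrow> bool" where
  "Ck_on 0 U f = continuous_on U f"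
| "Ck_on (Suc k) U f =
     (f differentiable_on U \<and> (\<forall>v. Ck_on k U (\<lambda>x. frechet_derivative f (at x) v)))"

definition smooth_on :: "'a::euclidean_space set \<Rightarrow> ('a \<Rightarrow> 'b::real_normed_vector) \<Rightarrow> bool" where
  "smooth_on U f \<longleftrightarrow> (\<forall>k. Ck_on k U f)"

definition smooth_unit_vf_S3 :: "(real^4 \<Rightarrow> real^4) \<Rightarrow> bool" where
  "smooth_unit_vf_S3 \<zeta> \<longleftrightarrow>
     (\<exists>U. open U \<and> sphere 0 1 \<subseteq> U \<and> smooth_on U \<zeta>) \<and>
     (\<forall>x\<in>sphere 0 1. \<zeta> x \<bullet> x = 0 \<and> norm (\<zeta> x) = 1)"

text \<open>Riemannian divergence on S^3 at x: sum over an orthonormal basis e_i of the tangent space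
  of <nabla_{e_i} zeta, e_i>, written as the trace of the ambient derivative minus its
  normal-normal component (this only involves tangential derivatives).\<close>
definition sphere_div :: "(real^4 \<Rightarrow> real^4) \<Rightarrow> real^4 \<Rightarrow> real" where
  "sphere_div \<zeta> x =
     (\<Sum>b\<in>Basis. frechet_derivative \<zeta> (at x) b \<bullet> b) - frechet_derivative \<zeta> (at x) x \<bullet> x"

text \<open>Integral curves on S^3 (maximal ones are defined on all of R since S^3 is compact).\<close>
definition integral_curve_S3 :: "(real^4 \<Rightarrow> real^4) \<Rightarrow> (real \<Rightarrow> real^4) \<Rightarrow> bool" where
  "integral_curve_S3 \<zeta> \<gamma> \<longleftrightarrow>
     (\<forall>t. \<gamma> t \<in> sphere 0 1 \<and> (\<gamma> has_vector_derivative \<zeta> (\<gamma> t)) (at t))"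

definition great_circle :: "(real^4) set \<Rightarrow> bool" where
  "great_circle C \<longleftrightarrow> (\<exists>P. subspace P \<and> dim P = 2 \<and> C = sphere 0 1 \<inter> P)"

definition dual_form :: "(real^4 \<Rightarrow> real^4) \<Rightarrow> real^4 \<Rightarrow> real^4 \<Rightarrow> real" where
  "dual_form \<zeta> x a = \<zeta> x \<bullet> a"

definition d_dual_form :: "(real^4 \<Rightarrow> real^4) \<Rightarrow> real^4 \<Rightarrow> real^4 \<Rightarrow> real^4 \<Rightarrow> real" where
  "d_dual_form \<zeta> x v w =
     frechet_derivative \<zeta> (at x) v \<bullet> w - frechet_derivative \<zeta> (at x) w \<bullet> v"

definition omega_wedge_domega ::
  "(real^4 \<Rightarrow> real^4) \<Rightarrow> real^4 \<Rightarrow> real^4 \<Rightarrow> real^4 \<Rightarrow> real^4 \<Rightarrow> real" where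
  "omega_wedge_domega \<zeta> x u v w =
     dual_form \<zeta> x u * d_dual_form \<zeta> x v w
   - dual_form \<zeta> x v * d_dual_form \<zeta> x u w
   + dual_form \<zeta> x w * d_dual_form \<zeta> x u v"

definition wedge_nonzero_at :: "(real^4 \<Rightarrow> real^4) \<Rightarrow> real^4 \<Rightarrow> bool" where
  "wedge_nonzero_at \<zeta> x \<longleftrightarrow>
     (\<exists>u v w. u \<bullet> x = 0 \<and> v \<bullet> x = 0 \<and> w \<bullet> x = 0 \<and> omega_wedge_domega \<zeta> x u v w \<noteq> 0)"

end

theory Submission
  imports Defs
begin

text \<open>Suppose \<open>\<omega> \<and> d\<omega>\<close> vanished at some \<open>x\<close>. The derivative of \<open>\<zeta>\<close> maps the horizontal plane
  \<open>H = {x, \<zeta> x}\<^sup>\<perp>\<close> into itself and \<open>\<omega> \<and> d\<omega>(\<zeta> x, e\<^sub>1, e\<^sub>2) = d\<omega>(e\<^sub>1, e\<^sub>2)\<close>, so on \<open>H\<close> it would be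
  symmetric and hence have a real eigenvector \<open>v\<close>, \<open>D\<zeta>(v) = \<lambda> v\<close>. Since the integral curves are great
  circles traversed at unit speed, \<open>\<zeta>\<close> is transported by rotation along them:
  \<open>\<zeta>(cos t y + sin t \<zeta> y) = - sin t y + cos t \<zeta> y\<close>. Moving \<open>y\<close> from \<open>x\<close> in direction \<open>v\<close> and
  following the fibres for the time \<open>t\<^sub>0\<close> with \<open>cot t\<^sub>0 = -\<lambda>\<close>, the point \<open>cos t\<^sub>0 y + sin t\<^sub>0 \<zeta> y\<close>
  becomes stationary to first order while the field there does not: neighbouring fibres would meet,
  which is impossible. Integral curves exist because the
  radial extension of \<open>\<zeta>\<close> to \<open>\<real>\<^sup>4\<close> is globally Lipschitz, so Picard iteration converges on all of \<open>\<real>\<close>.\<close>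

section \<open>Global solutions of Lipschitz autonomous ODEs\<close>

primrec picard_iterate :: "('a::euclidean_space \<Rightarrow> 'a) \<Rightarrow> 'a \<Rightarrow> nat \<Rightarrow> real \<Rightarrow> 'a" where
  "picard_iterate F x0 0 = (\<lambda>t. x0)"
| "picard_iterate F x0 (Suc n) = (\<lambda>t. x0 + integral {0..t} (\<lambda>s. F (picard_iterate F x0 n s)))"

lemma continuous_on_picard_iterate:
  assumes "continuous_on UNIV F"
  shows "continuous_on {0..T} (picard_iterate F x0 n)"
proof (induction n)
  case 0
  then show ?case by simp
next
  case (Suc n)
  have "continuous_on {0..T} (\<lambda>s. F (picard_iterate F x0 n s))"
    by (rule continuous_on_compose2[OF assms Suc]) auto
  then have "continuous_on {0..T} (\<lambda>t. integral {0..t} (\<lambda>s. F (picard_iterate F x0 n s)))"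
    by (intro indefinite_integral_continuous_1 integrable_continuous_real)
  then show ?case by (auto intro!: continuous_intros)
qed

lemma integral_monomial:
  assumes "0 \<le> t"
  shows "integral {0..t} (\<lambda>s. c * s ^ n) = c * t ^ Suc n / Suc n"
proof -
  have "((\<lambda>s. c * s ^ Suc n / Suc n) has_real_derivative c * s ^ n) (at s)" for s
    by (auto intro!: derivative_eq_intros simp del: power_Suc)
  then have "((\<lambda>s. c * s ^ n) has_integral c * t ^ Suc n / Suc n - c * 0 ^ Suc n / Suc n) {0..t}"
    by (intro fundamental_theorem_of_calculus[OF assms])
      (auto simp: has_real_derivative_iff_has_vector_derivative[symmetric] intro: has_field_derivative_at_within)
  from integral_unique[OF this] show ?thesis by simp
qed

lemma picard_iterate_step_bound:
  assumes L: "K-lipschitz_on UNIV F" and t: "0 \<le> t"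
  shows "norm (picard_iterate F x0 (Suc n) t - picard_iterate F x0 n t)
    \<le> norm (F x0) * K ^ n * t ^ Suc n / fact (Suc n)"
  using t
proof (induction n arbitrary: t)
  case 0
  then show ?case by (simp add: integral_const_real)
next
  case (Suc n)
  have cF: "continuous_on UNIV F" using L lipschitz_on_continuous_on by blast
  have K: "0 \<le> K" using L lipschitz_on_nonneg by blast
  define g where "g s = F (picard_iterate F x0 (Suc n) s) - F (picard_iterate F x0 n s)" for s
  define C where "C = K * norm (F x0) * K ^ n / fact (Suc n)"
  have integrable: "(\<lambda>s. F (picard_iterate F x0 m s)) integrable_on {0..t}" for m
    by (intro integrable_continuous_real continuous_on_compose2[OF cF continuous_on_picard_iterate[OF cF]])
      auto
  have "integral {0..t} g = integral {0..t} (\<lambda>s. F (picard_iterate F x0 (Suc n) s))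
      - integral {0..t} (\<lambda>s. F (picard_iterate F x0 n s))"
    unfolding g_def by (rule integral_diff[OF integrable integrable])
  then have "picard_iterate F x0 (Suc (Suc n)) t - picard_iterate F x0 (Suc n) t = integral {0..t} g"
    by simp
  also have "norm \<dots> \<le> integral {0..t} (\<lambda>s. C * s ^ Suc n)"
  proof (rule integral_norm_bound_integral)
    show "g integrable_on {0..t}"
      unfolding g_def by (rule integrable_diff[OF integrable integrable])
    show "(\<lambda>s. C * s ^ Suc n) integrable_on {0..t}"
      by (rule integrable_continuous_real) (auto intro!: continuous_intros)
    fix s assume s: "s \<in> {0..t}"
    have "norm (g s) \<le> K * norm (picard_iterate F x0 (Suc n) s - picard_iterate F x0 n s)"
      unfolding g_def using lipschitz_onD[OF L] by (simp add: dist_norm)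
    also have "\<dots> \<le> K * (norm (F x0) * K ^ n * s ^ Suc n / fact (Suc n))"
      using Suc.IH[of s] s K by (intro mult_left_mono) auto
    finally show "norm (g s) \<le> C * s ^ Suc n"
      by (simp add: C_def field_simps)
  qed
  also have "\<dots> = norm (F x0) * K ^ Suc n * t ^ Suc (Suc n) / fact (Suc (Suc n))"
    unfolding integral_monomial[OF Suc.prems] C_def by (simp add: field_simps)
  finally show ?case .
qed

definition picard_limit :: "('a::euclidean_space \<Rightarrow> 'a) \<Rightarrow> 'a \<Rightarrow> real \<Rightarrow> 'a" where
  "picard_limit F x0 t = x0 + (\<Sum>k. picard_iterate F x0 (Suc k) t - picard_iterate F x0 k t)"

lemma picard_limit_0 [simp]: "picard_limit F x0 0 = x0"
proof -
  have "picard_iterate F x0 (Suc k) 0 - picard_iterate F x0 k 0 = 0" for k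
    by (cases k) auto
  then show ?thesis unfolding picard_limit_def by simp
qed

lemma summable_exponential_majorant:
  fixes C K T :: real
  assumes "0 \<le> C" "0 \<le> K" "0 \<le> T"
  shows "summable (\<lambda>k. C * K ^ k * T ^ Suc k / fact (Suc k))"
proof (rule summable_comparison_test)
  show "summable (\<lambda>k. (C * T) * (inverse (fact k) * (K * T) ^ k))"
    by (intro summable_mult summable_exp)
  have "norm (C * K ^ k * T ^ Suc k / fact (Suc k)) \<le> (C * T) * (inverse (fact k) * (K * T) ^ k)" for k
  proof -
    have "norm (C * K ^ k * T ^ Suc k / fact (Suc k)) = C * K ^ k * T ^ Suc k / fact (Suc k)"
      using assms by simp
    also have "\<dots> \<le> C * K ^ k * T ^ Suc k / fact k"
      using assms by (intro divide_left_mono) (auto simp: fact_mono)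
    also have "\<dots> = (C * T) * (inverse (fact k) * (K * T) ^ k)"
      by (simp add: field_simps power_mult_distrib)
    finally show ?thesis .
  qed
  then show "\<exists>N. \<forall>k\<ge>N. norm (C * K ^ k * T ^ Suc k / fact (Suc k))
      \<le> (C * T) * (inverse (fact k) * (K * T) ^ k)"
    by blast
qed

lemma uniform_limit_picard_iterate:
  assumes L: "K-lipschitz_on UNIV F" and T: "0 \<le> T"
  shows "uniform_limit {0..T} (picard_iterate F x0) (picard_limit F x0) sequentially"
proof -
  have K: "0 \<le> K" using L lipschitz_on_nonneg by blast
  define M where "M k = norm (F x0) * K ^ k * T ^ Suc k / fact (Suc k)" for k
  have bound: "norm (picard_iterate F x0 (Suc k) t - picard_iterate F x0 k t) \<le> M k"
    if "t \<in> {0..T}" for k t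
  proof -
    have "norm (picard_iterate F x0 (Suc k) t - picard_iterate F x0 k t)
        \<le> norm (F x0) * K ^ k * t ^ Suc k / fact (Suc k)"
      using picard_iterate_step_bound[OF L] that by auto
    also have "\<dots> \<le> M k"
      unfolding M_def using that K by (intro divide_right_mono mult_left_mono power_mono) auto
    finally show ?thesis .
  qed
  have summable: "summable M"
    unfolding M_def using K T by (intro summable_exponential_majorant) auto
  have "uniform_limit {0..T} (\<lambda>n t. \<Sum>k<n. picard_iterate F x0 (Suc k) t - picard_iterate F x0 k t)
      (\<lambda>t. \<Sum>k. picard_iterate F x0 (Suc k) t - picard_iterate F x0 k t) sequentially"
    by (rule Weierstrass_m_test[OF bound summable])
  then have "uniform_limit {0..T}
      (\<lambda>n t. x0 + (\<Sum>k<n. picard_iterate F x0 (Suc k) t - picard_iterate F x0 k t))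
      (picard_limit F x0) sequentially"
    unfolding picard_limit_def by (intro uniform_limit_add uniform_limit_const)
  moreover have "x0 + (\<Sum>k<n. picard_iterate F x0 (Suc k) t - picard_iterate F x0 k t)
      = picard_iterate F x0 n t" for n t
    using sum_lessThan_telescope[of "\<lambda>k. picard_iterate F x0 k t" n]
    by (simp del: picard_iterate.simps(2))
  ultimately show ?thesis by simp
qed

lemma continuous_on_picard_limit:
  assumes L: "K-lipschitz_on UNIV F" and T: "0 \<le> T"
  shows "continuous_on {0..T} (picard_limit F x0)"
proof (rule uniform_limit_theorem[OF _ uniform_limit_picard_iterate[OF L T]])
  show "\<forall>\<^sub>F n in sequentially. continuous_on {0..T} (picard_iterate F x0 n)"
    using continuous_on_picard_iterate[OF lipschitz_on_continuous_on[OF L]] by simp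
qed simp

lemma picard_limit_integral_equation:
  assumes L: "K-lipschitz_on UNIV F" and t: "0 \<le> t"
  shows "picard_limit F x0 t = x0 + integral {0..t} (\<lambda>s. F (picard_limit F x0 s))"
proof -
  have cF: "continuous_on UNIV F" using L lipschitz_on_continuous_on by blast
  have U: "uniform_limit {0..t} (picard_iterate F x0) (picard_limit F x0) sequentially"
    by (rule uniform_limit_picard_iterate[OF L t])
  have "uniform_limit {0..t} (\<lambda>n s. F (picard_iterate F x0 n s)) (F \<circ> picard_limit F x0) sequentially"
    by (rule uniform_limit_compose[OF U lipschitz_on_uniformly_continuous[OF L]]) auto
  then obtain I J where I: "\<And>n. ((\<lambda>s. F (picard_iterate F x0 n s)) has_integral I n) {0..t}"
    and J: "((\<lambda>s. F (picard_limit F x0 s)) has_integral J) {0..t}" and IJ: "I \<longlonglongrightarrow> J"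
    by (rule uniform_limit_integral)
      (auto simp: o_def intro!: continuous_on_compose2[OF cF continuous_on_picard_iterate[OF cF]])
  have "integral {0..t} (\<lambda>s. F (picard_iterate F x0 n s)) = I n" for n
    using I by (rule integral_unique)
  then have "(\<lambda>n. picard_iterate F x0 (Suc n) t) \<longlonglongrightarrow> x0 + J"
    using tendsto_add[OF tendsto_const IJ, of x0] by simp
  moreover have "(\<lambda>n. picard_iterate F x0 (Suc n) t) \<longlonglongrightarrow> picard_limit F x0 t"
    using LIMSEQ_Suc[OF tendsto_uniform_limitI[OF U, of t]] t by (simp del: picard_iterate.simps(2))
  ultimately have "picard_limit F x0 t = x0 + J" using LIMSEQ_unique by blast
  then show ?thesis using J by (simp add: integral_unique)
qed

lemma picard_limit_has_vector_derivative:
  assumes L: "K-lipschitz_on UNIV F" and t: "0 \<le> t"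
  shows "(picard_limit F x0 has_vector_derivative F (picard_limit F x0 t)) (at t within {0..})"
proof -
  have cF: "continuous_on UNIV F" using L lipschitz_on_continuous_on by blast
  have "continuous_on {0..t+1} (\<lambda>s. F (picard_limit F x0 s))"
    by (rule continuous_on_compose2[OF cF continuous_on_picard_limit[OF L]]) (use t in auto)
  then have "((\<lambda>u. x0 + integral {0..u} (\<lambda>s. F (picard_limit F x0 s)))
      has_vector_derivative F (picard_limit F x0 t)) (at t within {0..t+1})"
    using t by (auto intro!: derivative_eq_intros integral_has_vector_derivative)
  then have "(picard_limit F x0 has_vector_derivative F (picard_limit F x0 t)) (at t within {0..t+1})"
    by (rule has_vector_derivative_transform_within[where d=1])
      (use t picard_limit_integral_equation[OF L] in auto)
  moreover have "at t within {0..t+1} = at t within {0..}"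
    by (rule at_within_nhd[where S="{t-1<..<t+1}"]) auto
  ultimately show ?thesis by simp
qed

lemma picard_limit_reflected_has_vector_derivative:
  assumes L: "K-lipschitz_on UNIV F" and t: "t \<le> 0"
  shows "((\<lambda>s. picard_limit (\<lambda>y. - F y) x0 (- s)) has_vector_derivative
      F (picard_limit (\<lambda>y. - F y) x0 (- t))) (at t within {..0})"
proof -
  have "K-lipschitz_on UNIV (\<lambda>y. - F y)" using L by (simp add: lipschitz_on_minus)
  from picard_limit_has_vector_derivative[OF this, of "- t" x0] t
  have "(picard_limit (\<lambda>y. - F y) x0 has_vector_derivative - F (picard_limit (\<lambda>y. - F y) x0 (- t)))
      (at (- t) within uminus ` {..0})"
    by (simp add: image_uminus_atMost)
  moreover have "(uminus has_vector_derivative - 1) (at t within {..0})"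
    by (auto intro!: derivative_eq_intros)
  ultimately have "((picard_limit (\<lambda>y. - F y) x0 \<circ> uminus) has_vector_derivative
      (-1) *\<^sub>R - F (picard_limit (\<lambda>y. - F y) x0 (- t))) (at t within {..0})"
    by (intro vector_diff_chain_within)
  then show ?thesis by (simp add: o_def)
qed

lemma lipschitz_ode_global_solution:
  fixes F :: "'a::euclidean_space \<Rightarrow> 'a"
  assumes L: "K-lipschitz_on UNIV F"
  obtains \<gamma> where "\<gamma> 0 = x" "\<And>t. (\<gamma> has_vector_derivative F (\<gamma> t)) (at t)"
proof -
  define \<gamma> where "\<gamma> t = (if t \<in> {0..} then picard_limit F x t else picard_limit (\<lambda>y. - F y) x (- t))"
    for t
  have "(\<gamma> has_vector_derivative F (\<gamma> t)) (at t)" for t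
  proof -
    have "(\<gamma> has_vector_derivative (if t \<in> {0..} then F (picard_limit F x t)
        else F (picard_limit (\<lambda>y. - F y) x (- t)))) (at t within UNIV)"
      unfolding \<gamma>_def
      by (rule has_vector_derivative_If_within_closures[where T="{..0}"])
        (auto simp: Un_absorb2 intro: picard_limit_has_vector_derivative[OF L]
          picard_limit_reflected_has_vector_derivative[OF L])
    then show ?thesis by (simp add: \<gamma>_def if_distrib)
  qed
  moreover have "\<gamma> 0 = x" by (simp add: \<gamma>_def)
  ultimately show thesis using that by blast
qed

section \<open>Integral curves of smooth tangent unit fields on the sphere\<close>

lemma smooth_on_has_derivative:
  assumes "smooth_on U f" "open U" "x \<in> U"
  shows "(f has_derivative frechet_derivative f (at x)) (at x)"
proof -
  have "Ck_on (Suc 0) U f" using assms(1) unfolding smooth_on_def by blast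
  then have "f differentiable (at x)"
    using assms(2,3) by (simp add: differentiable_on_eq_differentiable_at)
  then show ?thesis by (simp add: frechet_derivative_works)
qed

lemma smooth_on_continuous_on_derivative:
  assumes "smooth_on U f"
  shows "continuous_on U (\<lambda>x. frechet_derivative f (at x) v)"
proof -
  have "Ck_on (Suc 0) U f" using assms unfolding smooth_on_def by blast
  then show ?thesis by simp
qed

lemma smooth_on_lipschitz_on_compact:
  fixes f :: "'a::euclidean_space \<Rightarrow> 'a"
  assumes smooth: "smooth_on U f" and U: "open U" and K: "compact K" "K \<subseteq> U"
  obtains L where "L-lipschitz_on K f"
proof -
  define f' where "f' p = Blinfun (frechet_derivative f (at (snd p)))" for p :: "real \<times> 'a"
  have bl: "bounded_linear (frechet_derivative f (at x))" if "x \<in> U" for x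
    using smooth_on_has_derivative[OF smooth U that] has_derivative_bounded_linear by blast
  have "local_lipschitz UNIV U (\<lambda>t::real. f)"
  proof (rule c1_implies_local_lipschitz[where f'=f'])
    fix t :: real and x assume "x \<in> U"
    then show "(f has_derivative blinfun_apply (f' (t, x))) (at x)"
      unfolding f'_def using smooth_on_has_derivative[OF smooth U] bl
      by (simp add: bounded_linear_Blinfun_apply)
  next
    show "continuous_on (UNIV \<times> U) f'"
    proof (rule continuous_on_blinfun_componentwise)
      fix i :: 'a
      have "continuous_on (UNIV \<times> U) (\<lambda>p::real \<times> 'a. frechet_derivative f (at (snd p)) i)"
        by (rule continuous_on_compose2[OF smooth_on_continuous_on_derivative[OF smooth]])
          (auto intro!: continuous_intros)
      then show "continuous_on (UNIV \<times> U) (\<lambda>p. blinfun_apply (f' p) i)"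
        by (rule continuous_on_cong[THEN iffD1, rotated 2])
          (auto simp: f'_def bl bounded_linear_Blinfun_apply)
    qed
  qed (use U in auto)
  then have "local_lipschitz {0::real} K (\<lambda>t::real. f)"
    by (rule local_lipschitz_subset) (use K in auto)
  then obtain L where "\<And>t. t \<in> {0::real} \<Longrightarrow> L-lipschitz_on K f"
    by (rule local_lipschitz_compact_implies_lipschitz) (use K in auto)
  then show ?thesis using that by blast
qed

definition radial_extension :: "('a::real_normed_vector \<Rightarrow> 'a) \<Rightarrow> 'a \<Rightarrow> 'a" where
  "radial_extension f y = norm y *\<^sub>R f (sgn y)"

lemma radial_extension_sphere [simp]: "x \<in> sphere 0 1 \<Longrightarrow> radial_extension f x = f x"
  by (simp add: radial_extension_def sgn_div_norm)

lemma norm_mult_sgn_diff_le: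
  fixes y y' :: "'a::real_normed_vector"
  assumes "y \<noteq> 0" "y' \<noteq> 0"
  shows "norm y' * norm (sgn y - sgn y') \<le> 2 * norm (y - y')"
proof -
  have "norm y' / norm y = 1 + (norm y' - norm y) / norm y"
    using assms by (simp add: field_simps)
  moreover have "norm y' *\<^sub>R (sgn y - sgn y') = (norm y' / norm y) *\<^sub>R y - y'"
    using assms by (simp add: sgn_div_norm scaleR_diff_right divide_inverse_commute)
  ultimately have "norm y' *\<^sub>R (sgn y - sgn y') = (y - y') + ((norm y' - norm y) / norm y) *\<^sub>R y"
    by (simp add: scaleR_add_left)
  then have "norm y' * norm (sgn y - sgn y') = norm ((y - y') + ((norm y' - norm y) / norm y) *\<^sub>R y)"
    by (metis norm_scaleR norm_ge_zero abs_of_nonneg)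
  also have "\<dots> \<le> norm (y - y') + \<bar>norm y' - norm y\<bar>"
    using norm_triangle_ineq[of "y - y'" "((norm y' - norm y) / norm y) *\<^sub>R y"] assms by simp
  also have "\<bar>norm y' - norm y\<bar> \<le> norm (y - y')"
    using norm_triangle_ineq3[of y' y] by (simp add: norm_minus_commute)
  finally show ?thesis by simp
qed

lemma norm_radial_extension:
  assumes "\<forall>x\<in>sphere 0 1. norm (f x) = 1"
  shows "norm (radial_extension f y) = norm y"
  using assms by (cases "y = 0") (auto simp: radial_extension_def norm_sgn)

lemma lipschitz_on_radial_extension:
  assumes L: "L-lipschitz_on (sphere 0 1) f" and unit: "\<forall>x\<in>sphere 0 1. norm (f x) = 1"
  shows "(1 + 2 * L)-lipschitz_on UNIV (radial_extension f)"
proof (rule lipschitz_onI)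
  have L0: "0 \<le> L" using L lipschitz_on_nonneg by blast
  then show "0 \<le> 1 + 2 * L" by simp
  fix y y' :: 'a
  show "dist (radial_extension f y) (radial_extension f y') \<le> (1 + 2 * L) * dist y y'"
  proof (cases "y = 0 \<or> y' = 0")
    case True
    have "radial_extension f 0 = 0" by (simp add: radial_extension_def)
    with True have "dist (radial_extension f y) (radial_extension f y') = dist y y'"
      using norm_radial_extension[OF unit] by (auto simp: dist_norm norm_minus_commute)
    also have "\<dots> \<le> (1 + 2 * L) * dist y y'"
      using L0 by (simp add: algebra_simps)
    finally show ?thesis .
  next
    case False
    then have sphere: "sgn y \<in> sphere 0 1" "sgn y' \<in> sphere 0 1" by (auto simp: norm_sgn)
    have "radial_extension f y - radial_extension f y'
        = (norm y - norm y') *\<^sub>R f (sgn y) + norm y' *\<^sub>R (f (sgn y) - f (sgn y'))"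
      by (simp add: radial_extension_def algebra_simps)
    moreover have "norm (f (sgn y)) = 1" using unit sphere by blast
    ultimately have "dist (radial_extension f y) (radial_extension f y')
        \<le> \<bar>norm y - norm y'\<bar> + norm y' * dist (f (sgn y)) (f (sgn y'))"
      using norm_triangle_ineq[of "(norm y - norm y') *\<^sub>R f (sgn y)"
          "norm y' *\<^sub>R (f (sgn y) - f (sgn y'))"]
      by (simp add: dist_norm)
    also have "\<dots> \<le> norm (y - y') + norm y' * (L * norm (sgn y - sgn y'))"
      using lipschitz_onD[OF L sphere] norm_triangle_ineq3[of y y']
      by (intro add_mono mult_left_mono) (auto simp: dist_norm)
    also have "\<dots> \<le> norm (y - y') + L * (2 * norm (y - y'))"
      using norm_mult_sgn_diff_le[of y y'] False L0
      by (simp add: mult.left_commute mult_left_mono)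
    finally show ?thesis by (simp add: dist_norm algebra_simps)
  qed
qed

lemma inner_radial_extension_self:
  fixes f :: "'a::real_inner \<Rightarrow> 'a"
  assumes "\<forall>x\<in>sphere 0 1. f x \<bullet> x = 0"
  shows "radial_extension f y \<bullet> y = 0"
proof (cases "y = 0")
  case False
  then have "radial_extension f y \<bullet> y = (norm y * norm y) * (f (sgn y) \<bullet> sgn y)"
    by (simp add: radial_extension_def sgn_div_norm)
  also have "f (sgn y) \<bullet> sgn y = 0"
    using assms False by (simp add: norm_sgn)
  finally show ?thesis by simp
qed (simp add: radial_extension_def)

lemma norm_constant_if_velocity_orthogonal:
  fixes \<gamma> :: "real \<Rightarrow> 'a::real_inner"
  assumes "\<And>t. (\<gamma> has_vector_derivative V t) (at t)" "\<And>t. V t \<bullet> \<gamma> t = 0"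
  shows "norm (\<gamma> t) = norm (\<gamma> 0)"
proof -
  have "\<exists>c. \<forall>t\<in>UNIV. \<gamma> t \<bullet> \<gamma> t = c"
  proof (rule has_derivative_zero_constant)
    fix t :: real
    have "((\<lambda>t. \<gamma> t \<bullet> \<gamma> t) has_derivative (\<lambda>h. \<gamma> t \<bullet> (h *\<^sub>R V t) + (h *\<^sub>R V t) \<bullet> \<gamma> t)) (at t)"
      using assms(1)[of t] unfolding has_vector_derivative_def by (intro has_derivative_inner)
    then show "((\<lambda>t. \<gamma> t \<bullet> \<gamma> t) has_derivative (\<lambda>h. 0)) (at t within UNIV)"
      using assms(2)[of t] by (simp add: inner_commute)
  qed auto
  then show ?thesis by (metis UNIV_I norm_eq_sqrt_inner)
qed

lemma integral_curve_S3_exists: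
  assumes "smooth_unit_vf_S3 \<zeta>" "x \<in> sphere 0 1"
  obtains \<gamma> where "\<gamma> 0 = x" "integral_curve_S3 \<zeta> \<gamma>"
proof -
  obtain U where U: "open U" "sphere 0 1 \<subseteq> U" "smooth_on U \<zeta>"
    and tangent_unit: "\<forall>x\<in>sphere 0 1. \<zeta> x \<bullet> x = 0 \<and> norm (\<zeta> x) = 1"
    using assms(1) unfolding smooth_unit_vf_S3_def by blast
  obtain L where "L-lipschitz_on (sphere 0 1) \<zeta>"
    using smooth_on_lipschitz_on_compact[OF U(3,1) compact_sphere U(2)] by blast
  then have "(1 + 2 * L)-lipschitz_on UNIV (radial_extension \<zeta>)"
    by (rule lipschitz_on_radial_extension) (use tangent_unit in auto)
  then obtain \<gamma> where \<gamma>0: "\<gamma> 0 = x"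
    and \<gamma>': "\<And>t. (\<gamma> has_vector_derivative radial_extension \<zeta> (\<gamma> t)) (at t)"
    by (rule lipschitz_ode_global_solution[where x = x]) blast
  have "norm (\<gamma> t) = norm (\<gamma> 0)" for t
    by (rule norm_constant_if_velocity_orthogonal[OF \<gamma>' inner_radial_extension_self])
      (use tangent_unit in auto)
  then have "\<gamma> t \<in> sphere 0 1" for t using \<gamma>0 assms(2) by simp
  with \<gamma>' have "integral_curve_S3 \<zeta> \<gamma>"
    unfolding integral_curve_S3_def by simp
  with \<gamma>0 show ?thesis using that by blast
qed

section \<open>Elementary geometry and linear algebra\<close>

lemma cos_sin_in_sphere:
  fixes x u :: "'a::real_inner"
  assumes "norm x = 1" "norm u = 1" "x \<bullet> u = 0"
  shows "cos s *\<^sub>R x + sin s *\<^sub>R u \<in> sphere 0 1"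
proof -
  have "(cos s *\<^sub>R x + sin s *\<^sub>R u) \<bullet> (cos s *\<^sub>R x + sin s *\<^sub>R u) = (cos s)\<^sup>2 + (sin s)\<^sup>2"
    using assms by (simp add: norm_eq_1 inner_add_left inner_add_right inner_commute power2_eq_square)
  then show ?thesis by (simp add: norm_eq_1)
qed

lemma cos_sin_has_vector_derivative:
  "((\<lambda>s. cos s *\<^sub>R a + sin s *\<^sub>R b) has_vector_derivative (- sin s) *\<^sub>R a + cos s *\<^sub>R b) (at s)"
  by (auto intro!: derivative_eq_intros)

lemma has_derivative_comp_has_vector_derivative:
  assumes "(f has_derivative f') (at (c s))" "(c has_vector_derivative v) (at s)"
  shows "((\<lambda>r. f (c r)) has_vector_derivative f' v) (at s)"
  using vector_derivative_diff_chain_within[OF assms(2) has_derivative_at_withinI[OF assms(1)]]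
  by (simp add: o_def)

lemma inner_derivatives_eq_0_if_inner_const:
  fixes f g :: "real \<Rightarrow> 'a::real_inner"
  assumes "(f has_vector_derivative f') (at s)" "(g has_vector_derivative g') (at s)"
    and "\<And>r. f r \<bullet> g r = k"
  shows "f s \<bullet> g' + f' \<bullet> g s = 0"
proof -
  have "((\<lambda>r. f r \<bullet> g r) has_derivative (\<lambda>h. f s \<bullet> (h *\<^sub>R g') + (h *\<^sub>R f') \<bullet> g s)) (at s)"
    using assms(1,2) unfolding has_vector_derivative_def by (rule has_derivative_inner)
  moreover have "((\<lambda>r. f r \<bullet> g r) has_derivative (\<lambda>h. 0)) (at s)"
    using assms(3) by simp
  ultimately have "(\<lambda>h. f s \<bullet> (h *\<^sub>R g') + (h *\<^sub>R f') \<bullet> g s) = (\<lambda>h. 0)"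
    by (rule has_derivative_unique)
  from fun_cong[OF this, of 1] show ?thesis by simp
qed

lemma has_vector_derivative_in_subspace:
  fixes \<gamma> :: "real \<Rightarrow> 'a::euclidean_space"
  assumes P: "subspace P" and \<gamma>: "\<And>t. \<gamma> t \<in> P" and \<gamma>': "(\<gamma> has_vector_derivative v) (at s)"
  shows "v \<in> P"
proof -
  \<comment> \<open>the component of \<open>v\<close> orthogonal to \<open>P\<close> is the derivative of a function vanishing identically\<close>
  obtain y z where y: "y \<in> span P" and z: "\<And>w. w \<in> span P \<Longrightarrow> orthogonal z w" and v: "v = y + z"
    using orthogonal_subspace_decomp_exists[of P v] by metis
  have span_P: "span P = P" using P by (rule span_eq_iff[THEN iffD2])
  have "((\<lambda>t. z \<bullet> \<gamma> t) has_derivative (\<lambda>h. z \<bullet> (h *\<^sub>R v))) (at s)"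
    using \<gamma>' unfolding has_vector_derivative_def by (rule has_derivative_inner_right)
  moreover have "((\<lambda>t. z \<bullet> \<gamma> t) has_derivative (\<lambda>h. 0)) (at s)"
    using z \<gamma> span_P by (simp add: orthogonal_def)
  ultimately have "(\<lambda>h. z \<bullet> (h *\<^sub>R v)) = (\<lambda>h. 0)" by (rule has_derivative_unique)
  then have "z \<bullet> v = 0" by (metis inner_scaleR_right mult_1)
  moreover have "z \<bullet> y = 0" using z y by (simp add: orthogonal_def)
  ultimately have "z = 0" using v by (simp add: inner_add_right)
  then show ?thesis using v y span_P by simp
qed

lemma span_orthonormal_pair_decomp:
  fixes x z y :: "'a::real_inner"
  assumes "y \<in> span {x, z}" "x \<bullet> x = 1" "z \<bullet> z = 1" "x \<bullet> z = 0"
  shows "y = (y \<bullet> x) *\<^sub>R x + (y \<bullet> z) *\<^sub>R z"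
proof -
  obtain k m where y: "y = k *\<^sub>R x + m *\<^sub>R z"
    using assms(1) by (auto simp: span_breakdown_eq span_singleton algebra_simps)
  moreover have "z \<bullet> x = 0" using assms(4) by (simp add: inner_commute)
  ultimately have "y \<bullet> x = k" "y \<bullet> z = m"
    using assms(2-4) by (simp_all add: inner_add_left)
  then show ?thesis using y by simp
qed

lemma dim_orthonormal_pair:
  fixes x z :: "'a::euclidean_space"
  assumes "x \<bullet> x = 1" "z \<bullet> z = 1" "x \<bullet> z = 0"
  shows "dim {x, z} = 2"
proof -
  have "independent {x, z}"
    by (rule pairwise_orthogonal_independent)
      (use assms in \<open>auto simp: pairwise_def orthogonal_def inner_commute\<close>)
  moreover have "x \<noteq> z" using assms by auto
  ultimately show ?thesis by (simp add: dim_eq_card_independent)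
qed

lemma unit_vector_orthogonal_to_finite_set:
  fixes B :: "'a::euclidean_space set"
  assumes "finite B" "card B < DIM('a)"
  obtains e where "e \<bullet> e = 1" "\<And>b. b \<in> B \<Longrightarrow> e \<bullet> b = 0"
proof -
  have "dim B < DIM('a)"
    using dim_le_card'[OF assms(1)] assms(2) by simp
  then obtain f where "f \<noteq> 0" "\<And>y. y \<in> span B \<Longrightarrow> orthogonal f y"
    using orthogonal_to_subspace_exists by blast
  then show ?thesis
    using that[of "f /\<^sub>R norm f"]
    by (auto simp: orthogonal_def span_base inner_commute power2_eq_square simp flip: power2_norm_eq_inner)
qed

lemma orthonormal_completion_real4:
  fixes x z :: "real^4"
  assumes xx: "x \<bullet> x = 1" and zz: "z \<bullet> z = 1" and xz: "x \<bullet> z = 0"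
  obtains e1 e2 where "e1 \<bullet> e1 = 1" "e2 \<bullet> e2 = 1" "e1 \<bullet> e2 = 0"
    "e1 \<bullet> x = 0" "e1 \<bullet> z = 0" "e2 \<bullet> x = 0" "e2 \<bullet> z = 0"
    "\<And>y. y = (y \<bullet> x) *\<^sub>R x + (y \<bullet> z) *\<^sub>R z + (y \<bullet> e1) *\<^sub>R e1 + (y \<bullet> e2) *\<^sub>R e2"
proof -
  obtain e1 where e1: "e1 \<bullet> e1 = 1" "e1 \<bullet> x = 0" "e1 \<bullet> z = 0"
    by (rule unit_vector_orthogonal_to_finite_set[of "{x, z}"]) (auto simp: card_insert_if)
  obtain e2 where e2: "e2 \<bullet> e2 = 1" "e2 \<bullet> x = 0" "e2 \<bullet> z = 0" "e2 \<bullet> e1 = 0"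
    by (rule unit_vector_orthogonal_to_finite_set[of "{x, z, e1}"]) (auto simp: card_insert_if)
  have "z \<bullet> x = 0" "x \<bullet> e1 = 0" "z \<bullet> e1 = 0" "x \<bullet> e2 = 0" "z \<bullet> e2 = 0" "e1 \<bullet> e2 = 0"
    using xz e1 e2 by (simp_all add: inner_commute)
  note ips = xx zz xz e1 e2 this
  define B where "B = {x, z, e1, e2}"
  have "x \<noteq> 0" "z \<noteq> 0" "e1 \<noteq> 0" "e2 \<noteq> 0" using ips by auto
  then have "independent B"
    by (intro pairwise_orthogonal_independent) (auto simp: B_def pairwise_def orthogonal_def ips)
  moreover have "card B = 4"
    unfolding B_def using ips by (auto simp: card_insert_if)
  ultimately have span_B: "UNIV \<subseteq> span B"
    using card_eq_dim[of B UNIV] by (simp add: B_def)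
  have "y = (y \<bullet> x) *\<^sub>R x + (y \<bullet> z) *\<^sub>R z + (y \<bullet> e1) *\<^sub>R e1 + (y \<bullet> e2) *\<^sub>R e2" for y
  proof -
    define r where "r = y - ((y \<bullet> x) *\<^sub>R x + (y \<bullet> z) *\<^sub>R z + (y \<bullet> e1) *\<^sub>R e1 + (y \<bullet> e2) *\<^sub>R e2)"
    have "orthogonal r b" if "b \<in> B" for b
      using that ips unfolding B_def r_def orthogonal_def
      by (auto simp: inner_diff_left inner_add_left)
    then have "orthogonal r r" using orthogonal_to_span[of r B r] span_B by blast
    then show ?thesis unfolding r_def by (simp add: orthogonal_def)
  qed
  then show ?thesis using that e1 e2 by (simp add: inner_commute)
qed

lemma symmetric_2x2_real_eigenvector:
  fixes a b c :: real
  obtains p q l where "p \<noteq> 0 \<or> q \<noteq> 0" "a * p + b * q = l * p" "b * p + c * q = l * q"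
proof (cases "b = 0")
  case True
  then show ?thesis using that[of 1 0 a] by simp
next
  case False
  define d where "d = (a - c) / 2"
  define r where "r = sqrt (d\<^sup>2 + b\<^sup>2)"
  define l where "l = (a + c) / 2 + r"
  have "(l - a) * (l - c) = r\<^sup>2 - d\<^sup>2"
    unfolding l_def d_def by (simp add: field_simps power2_eq_square)
  also have "\<dots> = b\<^sup>2" by (simp add: r_def)
  finally have "b * b + c * (l - a) = l * (l - a)"
    by (simp add: algebra_simps power2_eq_square)
  then show ?thesis using that[of b "l - a" l] False by (simp add: algebra_simps)
qed

lemma eigenvector_of_symmetric_map_on_plane:
  fixes D :: "'a::real_inner \<Rightarrow> 'a"
  assumes "linear D" "e1 \<bullet> e1 = 1" "e2 \<bullet> e2 = 1" "e1 \<bullet> e2 = 0"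
    and "D e1 = a *\<^sub>R e1 + b *\<^sub>R e2" "D e2 = b *\<^sub>R e1 + c *\<^sub>R e2"
  obtains v l where "norm v = 1" "v \<in> span {e1, e2}" "D v = l *\<^sub>R v"
proof -
  obtain p q l where pq: "p \<noteq> 0 \<or> q \<noteq> 0" "a * p + b * q = l * p" "b * p + c * q = l * q"
    by (rule symmetric_2x2_real_eigenvector)
  define w where "w = p *\<^sub>R e1 + q *\<^sub>R e2"
  have "D w = (a * p + b * q) *\<^sub>R e1 + (b * p + c * q) *\<^sub>R e2"
    using assms(1,5,6) by (simp add: w_def linear_add linear_scale algebra_simps)
  then have Dw: "D w = l *\<^sub>R w" using pq by (simp add: w_def algebra_simps)
  have "w \<bullet> w = p\<^sup>2 + q\<^sup>2"
    using assms(2-4) by (simp add: w_def inner_add_left inner_add_right inner_commute power2_eq_square)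
  with pq have "w \<noteq> 0" by (auto simp: sum_power2_eq_zero_iff)
  moreover have "w \<in> span {e1, e2}" by (simp add: w_def span_add span_scale span_base)
  ultimately show ?thesis
    using that[of "w /\<^sub>R norm w" l] Dw assms(1) by (simp add: linear_scale span_scale)
qed

lemma unit_vector_orthogonal_to_cos_sin:
  fixes a b s :: real
  assumes "a * cos s + b * sin s = 0" "a\<^sup>2 + b\<^sup>2 = 1"
  shows "a = - sin s * (b * cos s - a * sin s)" "b = cos s * (b * cos s - a * sin s)"
    and "(b * cos s - a * sin s)\<^sup>2 = 1"
proof -
  have sc: "(sin s)\<^sup>2 + (cos s)\<^sup>2 = 1" by simp
  show "a = - sin s * (b * cos s - a * sin s)" "b = cos s * (b * cos s - a * sin s)"
    using assms(1) sc by algebra+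
  show "(b * cos s - a * sin s)\<^sup>2 = 1"
    using assms sc by algebra
qed

lemma pos_if_continuous_nonvanishing:
  fixes f :: "real \<Rightarrow> real"
  assumes "continuous_on UNIV f" "\<And>s. f s \<noteq> 0" "f 0 > 0"
  shows "f t > 0"
proof (rule ccontr)
  assume "\<not> f t > 0"
  then obtain r where "f r = 0"
    using IVT2'[of f t 0 0] IVT'[of f t 0 0] assms(1,3) continuous_on_subset[OF assms(1)]
    by (cases "0 \<le> t") force+
  with assms(2) show False by blast
qed

lemma focal_angle_exists:
  fixes l :: real
  obtains t where "cos t + l * sin t = 0" "l * cos t - sin t \<noteq> 0"
proof
  define r where "r = sqrt (1 + l\<^sup>2)"
  have r: "r > 0" "r * r = 1 + l * l" unfolding r_def by (simp_all add: add_pos_nonneg power2_eq_square)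
  have cos: "cos (pi / 2 + arctan l) = - l / r" and sin: "sin (pi / 2 + arctan l) = 1 / r"
    by (simp_all add: cos_add sin_add cos_arctan sin_arctan r_def)
  show "cos (pi / 2 + arctan l) + l * sin (pi / 2 + arctan l) = 0"
    unfolding cos sin by simp
  have "l * (- l / r) - 1 / r = - r" using r by (simp add: field_simps)
  then show "l * cos (pi / 2 + arctan l) - sin (pi / 2 + arctan l) \<noteq> 0"
    unfolding cos sin using r by simp
qed

section \<open>Unit fields whose integral curves are great circles\<close>

locale great_circle_field =
  fixes \<zeta> :: "real^4 \<Rightarrow> real^4"
  assumes smooth_unit: "smooth_unit_vf_S3 \<zeta>"
    and great_circles: "\<forall>\<gamma>. integral_curve_S3 \<zeta> \<gamma> \<longrightarrow> great_circle (range \<gamma>)"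
begin

abbreviation D\<zeta> :: "real^4 \<Rightarrow> real^4 \<Rightarrow> real^4" where
  "D\<zeta> x \<equiv> frechet_derivative \<zeta> (at x)"

lemma orthonormal_field:
  assumes "x \<in> sphere 0 1"
  shows "x \<bullet> x = 1" "\<zeta> x \<bullet> \<zeta> x = 1" "x \<bullet> \<zeta> x = 0" "\<zeta> x \<bullet> x = 0"
  using assms smooth_unit by (auto simp: smooth_unit_vf_S3_def inner_commute simp flip: norm_eq_1)

lemma has_derivative_field: "x \<in> sphere 0 1 \<Longrightarrow> (\<zeta> has_derivative D\<zeta> x) (at x)"
  using smooth_unit smooth_on_has_derivative unfolding smooth_unit_vf_S3_def by blast

lemma continuous_on_field: "continuous_on (sphere 0 1) \<zeta>"
  using has_derivative_field has_derivative_continuous continuous_at_imp_continuous_on by blast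

lemma field_in_plane_of_great_circle:
  assumes x: "x \<in> sphere 0 1" and y: "y \<in> sphere 0 1 \<inter> span {x, \<zeta> x}"
  shows "\<zeta> y \<in> span {x, \<zeta> x}"
proof -
  obtain \<gamma> where \<gamma>0: "\<gamma> 0 = x" and \<gamma>: "integral_curve_S3 \<zeta> \<gamma>"
    using integral_curve_S3_exists[OF smooth_unit x] by blast
  then obtain P where P: "subspace P" "dim P = 2" and range: "range \<gamma> = sphere 0 1 \<inter> P"
    using great_circles unfolding great_circle_def by blast
  have \<gamma>P: "\<gamma> t \<in> P" for t using range by blast
  have field_P: "\<zeta> (\<gamma> t) \<in> P" for t
    using has_vector_derivative_in_subspace[where \<gamma> = \<gamma>, OF P(1) \<gamma>P] \<gamma>
    unfolding integral_curve_S3_def by blast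
  have span_P: "span {x, \<zeta> x} = P"
  proof (rule subspace_dim_equal[OF subspace_span P(1)])
    show "span {x, \<zeta> x} \<subseteq> P"
      using \<gamma>P[of 0] field_P[of 0] \<gamma>0 P(1) by (simp add: span_minimal)
    show "dim P \<le> dim (span {x, \<zeta> x})"
      using P(2) dim_orthonormal_pair[OF orthonormal_field(1-3)[OF x]] by simp
  qed
  then have "y \<in> range \<gamma>" using y range by simp
  then show ?thesis using field_P span_P by blast
qed

lemma field_rotates_along_great_circle:
  assumes x: "x \<in> sphere 0 1"
  shows "\<zeta> (cos t *\<^sub>R x + sin t *\<^sub>R \<zeta> x) = (- sin t) *\<^sub>R x + cos t *\<^sub>R \<zeta> x"
proof -
  note on = orthonormal_field[OF x]
  define c where "c s = cos s *\<^sub>R x + sin s *\<^sub>R \<zeta> x" for s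
  define a where "a s = \<zeta> (c s) \<bullet> x" for s
  define b where "b s = \<zeta> (c s) \<bullet> \<zeta> x" for s
  define f where "f s = b s * cos s - a s * sin s" for s
  have c_sphere: "c s \<in> sphere 0 1" for s
    unfolding c_def using on by (intro cos_sin_in_sphere) (auto simp: norm_eq_1)
  have "c s \<in> span {x, \<zeta> x}" for s
    by (simp add: c_def span_add span_scale span_base)
  then have decomp: "\<zeta> (c s) = a s *\<^sub>R x + b s *\<^sub>R \<zeta> x" for s
    unfolding a_def b_def
    using span_orthonormal_pair_decomp field_in_plane_of_great_circle[OF x] c_sphere on by blast
  have orth: "a s * cos s + b s * sin s = 0" for s
    using orthonormal_field(4)[OF c_sphere[of s]]
    by (simp add: c_def a_def b_def inner_add_right mult.commute)
  have unit: "(a s)\<^sup>2 + (b s)\<^sup>2 = 1" for s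
    using orthonormal_field(2)[OF c_sphere[of s]] on
    by (simp add: decomp[of s] inner_add_left inner_add_right inner_commute power2_eq_square)
  note circle = unit_vector_orthogonal_to_cos_sin[OF orth unit, folded f_def]
  have "f t > 0"
  proof (rule pos_if_continuous_nonvanishing[where f = f])
    have "continuous_on UNIV c" unfolding c_def by (intro continuous_intros)
    then have "continuous_on UNIV (\<lambda>s. \<zeta> (c s))"
      by (rule continuous_on_compose2[OF continuous_on_field]) (use c_sphere in blast)
    then show "continuous_on UNIV f"
      unfolding f_def a_def b_def by (intro continuous_intros)
    show "f s \<noteq> 0" for s using circle(3)[of s] by auto
    show "f 0 > 0" using on by (simp add: f_def a_def b_def c_def)
  qed
  then have "f t = 1" using circle(3)[of t] by (simp add: power2_eq_1_iff)
  then show ?thesis using decomp[of t] circle(1,2)[of t] by (simp add: c_def)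
qed

lemma derivative_field_normal_components:
  assumes x: "x \<in> sphere 0 1" and u: "norm u = 1" "u \<bullet> x = 0"
  shows "D\<zeta> x u \<bullet> x = - (\<zeta> x \<bullet> u)" and "D\<zeta> x u \<bullet> \<zeta> x = 0"
proof -
  \<comment> \<open>differentiate \<open>\<zeta> \<bullet> c = 0\<close> and \<open>\<zeta> \<bullet> \<zeta> = 1\<close> along the great circle \<open>c\<close> through \<open>x\<close> in direction \<open>u\<close>\<close>
  define c where "c s = cos s *\<^sub>R x + sin s *\<^sub>R u" for s
  have c_sphere: "c s \<in> sphere 0 1" for s
    unfolding c_def using x u by (intro cos_sin_in_sphere) (auto simp: inner_commute)
  have c0: "c 0 = x" by (simp add: c_def)
  have c': "(c has_vector_derivative u) (at 0)"
    using cos_sin_has_vector_derivative[of x u 0] by (simp add: c_def[abs_def])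
  have \<zeta>c': "((\<lambda>s. \<zeta> (c s)) has_vector_derivative D\<zeta> x u) (at 0)"
    using has_derivative_comp_has_vector_derivative[OF _ c'] has_derivative_field[OF x] c0 by simp
  have "\<zeta> (c 0) \<bullet> u + D\<zeta> x u \<bullet> c 0 = 0"
    by (rule inner_derivatives_eq_0_if_inner_const[OF \<zeta>c' c', where k = 0])
      (use orthonormal_field c_sphere in auto)
  then show "D\<zeta> x u \<bullet> x = - (\<zeta> x \<bullet> u)" using c0 by simp
  have "\<zeta> (c 0) \<bullet> D\<zeta> x u + D\<zeta> x u \<bullet> \<zeta> (c 0) = 0"
    by (rule inner_derivatives_eq_0_if_inner_const[OF \<zeta>c' \<zeta>c', where k = 1])
      (use orthonormal_field c_sphere in auto)
  then show "D\<zeta> x u \<bullet> \<zeta> x = 0" using c0 by (simp add: inner_commute)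
qed

lemma horizontal_eigenvector_if_wedge_vanishes:
  assumes x: "x \<in> sphere 0 1" and vanish: "\<not> wedge_nonzero_at \<zeta> x"
  obtains v l where "norm v = 1" "v \<bullet> x = 0" "v \<bullet> \<zeta> x = 0" "D\<zeta> x v = l *\<^sub>R v"
proof -
  note on = orthonormal_field[OF x]
  obtain e1 e2 where e: "e1 \<bullet> e1 = 1" "e2 \<bullet> e2 = 1" "e1 \<bullet> e2 = 0"
    "e1 \<bullet> x = 0" "e1 \<bullet> \<zeta> x = 0" "e2 \<bullet> x = 0" "e2 \<bullet> \<zeta> x = 0"
    and decomp: "\<And>y. y = (y \<bullet> x) *\<^sub>R x + (y \<bullet> \<zeta> x) *\<^sub>R \<zeta> x + (y \<bullet> e1) *\<^sub>R e1 + (y \<bullet> e2) *\<^sub>R e2"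
    using orthonormal_completion_real4[OF on(1-3)] by blast
  have horizontal: "D\<zeta> x e \<bullet> x = 0" "D\<zeta> x e \<bullet> \<zeta> x = 0"
    if "e \<bullet> e = 1" "e \<bullet> x = 0" "e \<bullet> \<zeta> x = 0" for e
    using derivative_field_normal_components[OF x, of e] that by (auto simp: norm_eq_1 inner_commute)
  \<comment> \<open>\<open>\<omega> \<and> d\<omega>(\<zeta> x, e\<^sub>1, e\<^sub>2) = d\<omega>(e\<^sub>1, e\<^sub>2)\<close>: its vanishing makes \<open>D\<zeta> x\<close> symmetric on \<open>span {e\<^sub>1, e\<^sub>2}\<close>\<close>
  have "omega_wedge_domega \<zeta> x (\<zeta> x) e1 e2 = 0"
    using vanish on e unfolding wedge_nonzero_at_def by blast
  then have symmetric: "D\<zeta> x e2 \<bullet> e1 = D\<zeta> x e1 \<bullet> e2"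
    using on e by (simp add: omega_wedge_domega_def dual_form_def d_dual_form_def inner_commute)
  have "linear (D\<zeta> x)" using has_derivative_field[OF x] has_derivative_linear by blast
  moreover have "D\<zeta> x e1 = (D\<zeta> x e1 \<bullet> e1) *\<^sub>R e1 + (D\<zeta> x e1 \<bullet> e2) *\<^sub>R e2"
    using decomp[of "D\<zeta> x e1"] horizontal[of e1] e by simp
  moreover have "D\<zeta> x e2 = (D\<zeta> x e1 \<bullet> e2) *\<^sub>R e1 + (D\<zeta> x e2 \<bullet> e2) *\<^sub>R e2"
    using decomp[of "D\<zeta> x e2"] horizontal[of e2] e symmetric by simp
  ultimately obtain v l where v: "norm v = 1" "v \<in> span {e1, e2}" "D\<zeta> x v = l *\<^sub>R v"
    using eigenvector_of_symmetric_map_on_plane[OF _ e(1-3)] by blast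
  have "orthogonal w v" if "e1 \<bullet> w = 0" "e2 \<bullet> w = 0" for w
    using orthogonal_to_span[OF v(2), of w] that by (auto simp: orthogonal_def inner_commute)
  then have "orthogonal x v" "orthogonal (\<zeta> x) v" using e by auto
  then have "v \<bullet> x = 0" "v \<bullet> \<zeta> x = 0" by (simp_all add: orthogonal_def inner_commute)
  with v show ?thesis using that by blast
qed

lemma no_horizontal_eigenvector:
  assumes x: "x \<in> sphere 0 1" and v: "norm v = 1" "v \<bullet> x = 0" "v \<bullet> \<zeta> x = 0"
    and eigen: "D\<zeta> x v = l *\<^sub>R v"
  shows False
proof -
  \<comment> \<open>at the angle \<open>t\<close> the fibres through the great circle \<open>c\<close> focus: \<open>\<Phi>' 0 = 0\<close>, yet \<open>(\<zeta> \<circ> \<Phi>)' 0 \<noteq> 0\<close>\<close>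
  obtain t where focal: "cos t + l * sin t = 0" and nonzero: "l * cos t - sin t \<noteq> 0"
    by (rule focal_angle_exists)
  define c where "c s = cos s *\<^sub>R x + sin s *\<^sub>R v" for s
  define \<Phi> where "\<Phi> s = cos t *\<^sub>R c s + sin t *\<^sub>R \<zeta> (c s)" for s
  have c_sphere: "c s \<in> sphere 0 1" for s
    unfolding c_def using x v by (intro cos_sin_in_sphere) (auto simp: inner_commute)
  have c0: "c 0 = x" by (simp add: c_def)
  have c': "(c has_vector_derivative v) (at 0)"
    using cos_sin_has_vector_derivative[of x v 0] by (simp add: c_def[abs_def])
  have \<zeta>c': "((\<lambda>s. \<zeta> (c s)) has_vector_derivative l *\<^sub>R v) (at 0)"
    using has_derivative_comp_has_vector_derivative[OF has_derivative_field[OF x, folded c0] c']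
      eigen c0 by simp
  have "(\<Phi> has_vector_derivative cos t *\<^sub>R v + sin t *\<^sub>R (l *\<^sub>R v)) (at 0)"
    unfolding \<Phi>_def[abs_def] using c' \<zeta>c' by (auto intro!: derivative_eq_intros)
  with focal have \<Phi>': "(\<Phi> has_vector_derivative 0) (at 0)"
    by (simp add: algebra_simps flip: scaleR_add_left)
  have "\<Phi> 0 \<in> sphere 0 1"
    unfolding \<Phi>_def c0 using orthonormal_field[OF x] by (intro cos_sin_in_sphere) (auto simp: norm_eq_1)
  then have "((\<lambda>s. \<zeta> (\<Phi> s)) has_vector_derivative 0) (at 0)"
    using has_derivative_comp_has_vector_derivative[OF has_derivative_field \<Phi>']
      linear_0[OF has_derivative_linear[OF has_derivative_field]] by simp
  moreover have "(\<lambda>s. \<zeta> (\<Phi> s)) = (\<lambda>s. (- sin t) *\<^sub>R c s + cos t *\<^sub>R \<zeta> (c s))"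
    using field_rotates_along_great_circle[OF c_sphere] by (simp add: \<Phi>_def)
  moreover have "((\<lambda>s. (- sin t) *\<^sub>R c s + cos t *\<^sub>R \<zeta> (c s)) has_vector_derivative
      (- sin t) *\<^sub>R v + cos t *\<^sub>R (l *\<^sub>R v)) (at 0)"
    using c' \<zeta>c' by (auto intro!: derivative_eq_intros)
  ultimately have "(l * cos t - sin t) *\<^sub>R v = 0"
    using vector_derivative_unique_at by (fastforce simp: algebra_simps)
  with nonzero v show False by simp
qed

theorem wedge_nonzero_on_sphere: "x \<in> sphere 0 1 \<Longrightarrow> wedge_nonzero_at \<zeta> x"
  using horizontal_eigenvector_if_wedge_vanishes no_horizontal_eigenvector by metis

end

theorem mainTheorem9:
  fixes \<zeta> :: "real^4 \<Rightarrow> real^4"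
  assumes "smooth_unit_vf_S3 \<zeta>"
    and "\<forall>x\<in>sphere 0 1. sphere_div \<zeta> x = 0"
    and "\<forall>\<gamma>. integral_curve_S3 \<zeta> \<gamma> \<longrightarrow> great_circle (range \<gamma>)"
  shows "\<forall>x\<in>sphere 0 1. wedge_nonzero_at \<zeta> x"
proof -
  interpret great_circle_field \<zeta>
    using assms(1,3) by unfold_locales
  show ?thesis using wedge_nonzero_on_sphere by blast
qed

end
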